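(* Let $X\subseteq\Omega$ and $D\in\mathcal{I}^{\mathbf{c}}(X)$, and let $Y=\min(D)\cup(X-D)$. Then $\min(D)\subseteq\max(Y)$, and $$\pi(X,D)=\pi(Y,\min(D))=\sum_{I\in\mathcal{I}(Y)}(-1)^{|I\cap\min(D)|}\Big(\prod_{i\in I-\max(I)}\tau_{(i)}\Big)\Big(\prod_{i\in\max(I)-\min(D)}\eta_{(i)}\Big)x^{|I|}.$$
   Context: $\Omega$ is a finite set and $\mathbf{P}=(\Omega,\preccurlyeq_{\mathbf{P}})$ a poset. For $Y\subseteq\Omega$: $\max(Y)$, $\min(Y)$ are the maximal, minimal elements of $Y$ w.r.t. $\preccurlyeq_{\mathbf{P}}$; $\mathcal{I}(Y)$ is the set of ideals (down-closed subsets) of the subposet $Y$ with the induced order; $\mathcal{I}^{\mathbf{c}}(Y)$ is the set of ideals of the dual of that subposet (i.e., up-closed subsets of $Y$). $K$ is a commutative ring and $\tau,\eta\in K^{\Omega}$ are fixed. For $D,I\subseteq\Omega$, $\varphi(D,I)=(-1)^{|I\cap D|}\big(\prod_{i\in I-\max(I)}\tau_{(i)}\big)\big(\prod_{i\in\max(I)-D}\eta_{(i)}\big)$ if $I\cap D\subseteq\max(I)$, and $\varphi(D,I)=0$ otherwise. For $Y\subseteq\Omega$ and $D\subseteq Y$, $\pi(Y,D)=\sum_{I\in\mathcal{I}(Y)}\varphi(D,I)x^{|I|}\in K[x]$. *)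

theory Defs
  imports "HOL-Computational_Algebra.Polynomial"
begin

definition poset_on :: "'a set \<Rightarrow> ('a \<Rightarrow> 'a \<Rightarrow> bool) \<Rightarrow> bool" where
  "poset_on \<Omega> le \<longleftrightarrow>
     (\<forall>x\<in>\<Omega>. le x x) \<and>
     (\<forall>x\<in>\<Omega>. \<forall>y\<in>\<Omega>. le x y \<and> le y x \<longrightarrow> x = y) \<and>
     (\<forall>x\<in>\<Omega>. \<forall>y\<in>\<Omega>. \<forall>z\<in>\<Omega>. le x y \<and> le y z \<longrightarrow> le x z)"

definition maxs :: "('a \<Rightarrow> 'a \<Rightarrow> bool) \<Rightarrow> 'a set \<Rightarrow> 'a set" where
  "maxs le Y = {y \<in> Y. \<forall>z\<in>Y. le y z \<longrightarrow> z = y}"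

definition mins :: "('a \<Rightarrow> 'a \<Rightarrow> bool) \<Rightarrow> 'a set \<Rightarrow> 'a set" where
  "mins le Y = {y \<in> Y. \<forall>z\<in>Y. le z y \<longrightarrow> z = y}"

definition ideals :: "('a \<Rightarrow> 'a \<Rightarrow> bool) \<Rightarrow> 'a set \<Rightarrow> 'a set set" where
  "ideals le Y = {I. I \<subseteq> Y \<and> (\<forall>i\<in>I. \<forall>y\<in>Y. le y i \<longrightarrow> y \<in> I)}"

text \<open>Ideals of the dual of the subposet Y, i.e. up-closed subsets of Y.\<close>
definition coideals :: "('a \<Rightarrow> 'a \<Rightarrow> bool) \<Rightarrow> 'a set \<Rightarrow> 'a set set" where
  "coideals le Y = {I. I \<subseteq> Y \<and> (\<forall>i\<in>I. \<forall>y\<in>Y. le i y \<longrightarrow> y \<in> I)}"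

definition phi :: "('a \<Rightarrow> 'a \<Rightarrow> bool) \<Rightarrow> ('a \<Rightarrow> 'k::comm_ring_1) \<Rightarrow> ('a \<Rightarrow> 'k)
                    \<Rightarrow> 'a set \<Rightarrow> 'a set \<Rightarrow> 'k" where
  "phi le \<tau> \<eta> D I =
     (if I \<inter> D \<subseteq> maxs le I then
        (-1) ^ card (I \<inter> D) * (\<Prod>i\<in>I - maxs le I. \<tau> i) * (\<Prod>i\<in>maxs le I - D. \<eta> i)
      else 0)"

definition pi_poly :: "('a \<Rightarrow> 'a \<Rightarrow> bool) \<Rightarrow> ('a \<Rightarrow> 'k::comm_ring_1) \<Rightarrow> ('a \<Rightarrow> 'k)
                    \<Rightarrow> 'a set \<Rightarrow> 'a set \<Rightarrow> 'k poly" where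
  "pi_poly le \<tau> \<eta> Y D = (\<Sum>I\<in>ideals le Y. monom (phi le \<tau> \<eta> D I) (card I))"

end

theory Submission
  imports Defs
begin

text \<open>
  Since \<open>D\<close> is up-closed in \<open>X\<close>, nothing of \<open>Y\<close> lies strictly
  above a point of \<open>min(D)\<close>, so \<open>min(D) \<subseteq> max(Y)\<close>, and every ideal of \<open>Y\<close> is an ideal of \<open>X\<close>.
  Conversely, an ideal \<open>I\<close> of \<open>X\<close> with \<open>\<phi>(D, I) \<noteq> 0\<close> meets \<open>D\<close> only in maximal points of \<open>I\<close>;
  as \<open>I\<close> is down-closed, such points are minimal in \<open>D\<close>, so \<open>I \<subseteq> Y\<close>. Hence \<open>\<pi>(X, D)\<close> is a sum
  over the ideals of \<open>Y\<close> only, on which \<open>\<phi>(D, -)\<close> and \<open>\<phi>(min(D), -)\<close> agree because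
  \<open>Y \<inter> D = min(D)\<close>.
\<close>

lemma maxs_subset: "maxs le I \<subseteq> I"
  unfolding maxs_def by auto

lemma mins_subset: "mins le D \<subseteq> D"
  unfolding mins_def by auto

lemma ideals_subset: "I \<in> ideals le Y \<Longrightarrow> I \<subseteq> Y"
  unfolding ideals_def by auto

lemma finite_ideals: "finite Y \<Longrightarrow> finite (ideals le Y)"
  unfolding ideals_def by (auto intro: finite_subset[of _ "Pow Y"])

lemma Int_maxs_subset_maxs: "I \<subseteq> Y \<Longrightarrow> I \<inter> maxs le Y \<subseteq> maxs le I"
  unfolding maxs_def by blast

lemma mins_coideal_subset_maxs:
  assumes "D \<in> coideals le X"
  shows "mins le D \<subseteq> maxs le (mins le D \<union> (X - D))"
  using assms unfolding coideals_def mins_def maxs_def by blast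

lemma ideals_coideal_cut_subset:
  assumes "D \<in> coideals le X"
  shows "ideals le (mins le D \<union> (X - D)) \<subseteq> ideals le X"
proof
  fix I assume I: "I \<in> ideals le (mins le D \<union> (X - D))"
  have "D \<subseteq> X" and up: "\<And>d x. d \<in> D \<Longrightarrow> x \<in> X \<Longrightarrow> le d x \<Longrightarrow> x \<in> D"
    using assms unfolding coideals_def by auto
  have I_cut: "I \<subseteq> mins le D \<union> (X - D)" using I by (rule ideals_subset)
  have "y \<in> I" if "i \<in> I" "y \<in> X" "le y i" for i y
  proof (cases "y \<in> D")
    case True
    have "i \<in> X" using I_cut \<open>D \<subseteq> X\<close> mins_subset[of le D] \<open>i \<in> I\<close> by blast
    then have "i \<in> D" using up True \<open>le y i\<close> by blast
    then have "i \<in> mins le D" using I_cut \<open>i \<in> I\<close> by blast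
    with True that have "y = i" unfolding mins_def by blast
    with that show ?thesis by simp
  next
    case False
    with that have "y \<in> mins le D \<union> (X - D)" by blast
    with that I show ?thesis unfolding ideals_def by blast
  qed
  moreover have "I \<subseteq> X" using I_cut \<open>D \<subseteq> X\<close> mins_subset[of le D] by blast
  ultimately show "I \<in> ideals le X" unfolding ideals_def by blast
qed

lemma ideal_subset_coideal_cut:
  assumes I: "I \<in> ideals le X" and "D \<subseteq> X" and meets_maxs: "I \<inter> D \<subseteq> maxs le I"
  shows "I \<subseteq> mins le D \<union> (X - D)"
proof
  fix d assume d: "d \<in> I"
  show "d \<in> mins le D \<union> (X - D)"
  proof (cases "d \<in> D")
    case True
    have "w = d" if "w \<in> D" "le w d" for w
    proof -
      have "w \<in> I" using I \<open>D \<subseteq> X\<close> d that unfolding ideals_def by auto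
      with meets_maxs that have "w \<in> maxs le I" by auto
      with d that show ?thesis unfolding maxs_def by auto
    qed
    with True show ?thesis unfolding mins_def by auto
  next
    case False
    with d ideals_subset[OF I] show ?thesis by auto
  qed
qed

lemma phi_eq_0: "\<not> I \<inter> D \<subseteq> maxs le I \<Longrightarrow> phi le \<tau> \<eta> D I = 0"
  unfolding phi_def by simp

lemma phi_eq:
  "I \<inter> D \<subseteq> maxs le I \<Longrightarrow> phi le \<tau> \<eta> D I =
     (-1) ^ card (I \<inter> D) * (\<Prod>i\<in>I - maxs le I. \<tau> i) * (\<Prod>i\<in>maxs le I - D. \<eta> i)"
  unfolding phi_def by simp

lemma phi_cong_Int:
  assumes "I \<inter> D = I \<inter> D'"
  shows "phi le \<tau> \<eta> D I = phi le \<tau> \<eta> D' I"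
proof -
  have "maxs le I - D = maxs le I - D'"
    using assms maxs_subset[of le I] by blast
  with assms show ?thesis unfolding phi_def by simp
qed

lemma pi_poly_coideal_cut:
  assumes "finite X" and D: "D \<in> coideals le X"
  shows "pi_poly le \<tau> \<eta> X D = pi_poly le \<tau> \<eta> (mins le D \<union> (X - D)) (mins le D)"
proof -
  let ?Y = "mins le D \<union> (X - D)"
  have "D \<subseteq> X" using D unfolding coideals_def by auto
  then have "?Y \<subseteq> X" using mins_subset[of le D] by auto
  have vanish: "phi le \<tau> \<eta> D I = 0" if I: "I \<in> ideals le X - ideals le ?Y" for I
  proof (rule phi_eq_0, rule notI)
    assume "I \<inter> D \<subseteq> maxs le I"
    with I \<open>D \<subseteq> X\<close> have "I \<subseteq> ?Y" using ideal_subset_coideal_cut by blast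
    with I \<open>?Y \<subseteq> X\<close> have "I \<in> ideals le ?Y" unfolding ideals_def by blast
    with I show False by blast
  qed
  have "pi_poly le \<tau> \<eta> X D = (\<Sum>I\<in>ideals le ?Y. monom (phi le \<tau> \<eta> D I) (card I))"
    unfolding pi_poly_def
    by (rule sum.mono_neutral_right[OF finite_ideals[OF \<open>finite X\<close>] ideals_coideal_cut_subset[OF D]])
      (simp add: vanish)
  also have "\<dots> = pi_poly le \<tau> \<eta> ?Y (mins le D)"
    unfolding pi_poly_def
  proof (rule sum.cong)
    fix I assume "I \<in> ideals le ?Y"
    then have "I \<inter> D = I \<inter> mins le D"
      using ideals_subset mins_subset[of le D] by blast
    from phi_cong_Int[OF this]
    show "monom (phi le \<tau> \<eta> D I) (card I) = monom (phi le \<tau> \<eta> (mins le D) I) (card I)"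
      by (rule arg_cong)
  qed simp
  finally show ?thesis .
qed

lemma pi_poly_eq_sum_smult:
  assumes "\<And>I. I \<in> ideals le Y \<Longrightarrow> I \<inter> D \<subseteq> maxs le I"
  shows "pi_poly le \<tau> \<eta> Y D =
    (\<Sum>I\<in>ideals le Y.
       Polynomial.smult ((-1) ^ card (I \<inter> D) * (\<Prod>i\<in>I - maxs le I. \<tau> i) * (\<Prod>i\<in>maxs le I - D. \<eta> i))
         ([:0, 1:] ^ card I))"
  unfolding pi_poly_def by (rule sum.cong) (simp_all add: assms phi_eq monom_altdef)

theorem theorem3p1:
  fixes \<Omega> :: "'a set" and le :: "'a \<Rightarrow> 'a \<Rightarrow> bool"
    and \<tau> \<eta> :: "'a \<Rightarrow> 'k::comm_ring_1"
    and X D :: "'a set"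
  assumes "finite \<Omega>" and "poset_on \<Omega> le"
    and "X \<subseteq> \<Omega>" and "D \<in> coideals le X"
  defines "Y \<equiv> mins le D \<union> (X - D)"
  shows "mins le D \<subseteq> maxs le Y
    \<and> pi_poly le \<tau> \<eta> X D = pi_poly le \<tau> \<eta> Y (mins le D)
    \<and> pi_poly le \<tau> \<eta> Y (mins le D) =
           (\<Sum>I\<in>ideals le Y.
              Polynomial.smult ((-1) ^ card (I \<inter> mins le D)
                 * (\<Prod>i\<in>I - maxs le I. \<tau> i) * (\<Prod>i\<in>maxs le I - mins le D. \<eta> i))
                ([:0, 1:] ^ card I))"
proof (intro conjI)
  show min_max: "mins le D \<subseteq> maxs le Y"
    unfolding Y_def using assms(4) by (rule mins_coideal_subset_maxs)
  have "finite X" using assms(1,3) finite_subset by blast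
  then show "pi_poly le \<tau> \<eta> X D = pi_poly le \<tau> \<eta> Y (mins le D)"
    unfolding Y_def using assms(4) by (rule pi_poly_coideal_cut)
  have "I \<inter> mins le D \<subseteq> maxs le I" if "I \<in> ideals le Y" for I
    using min_max Int_maxs_subset_maxs[OF ideals_subset[OF that]] by blast
  then show "pi_poly le \<tau> \<eta> Y (mins le D) = (\<Sum>I\<in>ideals le Y.
      Polynomial.smult ((-1) ^ card (I \<inter> mins le D)
        * (\<Prod>i\<in>I - maxs le I. \<tau> i) * (\<Prod>i\<in>maxs le I - mins le D. \<eta> i))
        ([:0, 1:] ^ card I))"
    by (rule pi_poly_eq_sum_smult)
qed

end
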